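(* Let $(X,T)$ be a topological dynamical system. Then $\operatorname{supp}(X,T)$ is the smallest closed subset $K$ of $X$ with the following property: for every $x\in X$ and every open set $U\supseteq K$, the set $N(x,U)=\{n\in\mathbb{Z}_+:T^nx\in U\}$ has Banach density one. That is, $\operatorname{supp}(X,T)$ has this property, and every closed set $K\subset X$ with this property contains $\operatorname{supp}(X,T)$.
   Context: A topological dynamical system $(X,T)$ consists of a non-empty compact metric space $(X,d)$ and a continuous map $T:X\to X$. $\operatorname{supp}(X,T)$ is the smallest closed set $C\subset X$ with $\mu(C)=1$ for all $T$-invariant Borel probability measures $\mu$. A set $F\subset\mathbb{Z}_+$ has Banach density one if for every $\lambda<1$ there is $N\ge1$ with $\#(F\cap I)\ge\lambda\,\#(I)$ for every interval of integers $I\subset\mathbb{Z}_+$ with $\#(I)\ge N$. *)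

theory Defs
  imports "HOL-Probability.Probability"
begin

definition tds :: "'a::metric_space set \<Rightarrow> ('a \<Rightarrow> 'a) \<Rightarrow> bool" where
  "tds X T \<longleftrightarrow> X \<noteq> {} \<and> compact X \<and> continuous_on X T \<and> T ` X \<subseteq> X"

text \<open>T-invariant Borel probability measures on X (as Borel measures on the ambient
  space concentrated on X).\<close>
definition invariant_prob :: "'a::metric_space set \<Rightarrow> ('a \<Rightarrow> 'a) \<Rightarrow> 'a measure \<Rightarrow> bool" where
  "invariant_prob X T \<mu> \<longleftrightarrow> sets \<mu> = sets borel \<and> prob_space \<mu> \<and> emeasure \<mu> X = 1 \<and>
     (\<forall>A \<in> sets borel. emeasure \<mu> {x \<in> X. T x \<in> A} = emeasure \<mu> A)"

definition supp_tds :: "'a::metric_space set \<Rightarrow> ('a \<Rightarrow> 'a) \<Rightarrow> 'a set" where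
  "supp_tds X T = \<Inter> {C. closed C \<and> C \<subseteq> X \<and>
      (\<forall>\<mu>. invariant_prob X T \<mu> \<longrightarrow> emeasure \<mu> C = 1)}"

definition banach_density_one :: "nat set \<Rightarrow> bool" where
  "banach_density_one F \<longleftrightarrow> (\<forall>c::real. c < 1 \<longrightarrow> (\<exists>N\<ge>1. \<forall>a L. L \<ge> N \<longrightarrow>
      real (card (F \<inter> {a..<a+L})) \<ge> c * real L))"

definition return_times :: "('a \<Rightarrow> 'a) \<Rightarrow> 'a \<Rightarrow> 'a set \<Rightarrow> nat set" where
  "return_times T x U = {n. (T ^^ n) x \<in> U}"

definition density_one_property :: "'a::metric_space set \<Rightarrow> ('a \<Rightarrow> 'a) \<Rightarrow> 'a set \<Rightarrow> bool" where
  "density_one_property X T K \<longleftrightarrow>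
     (\<forall>x\<in>X. \<forall>U. open U \<and> K \<subseteq> U \<longrightarrow> banach_density_one (return_times T x U))"

end

theory Submission
  imports Defs
begin

text \<open>If some orbit spent a fraction of time bounded away from 0 outside an open neighbourhood U
  of the support along windows of unbounded length, the empirical measures of those windows would
  have a weak limit point (Krylov--Bogolyubov) which is invariant and charges the compact set X - U,
  contradicting that X - U misses the support. Conversely, if the closed set K has the density-one
  property and \<mu> is invariant, then for every open U containing K the Cesaro averages of the
  indicators of the preimages of U under the iterates of T tend to 1 on X while each integrates
  to \<mu> U, so \<mu> U = 1; shrinking U to K gives \<mu> K = 1, hence supp(X,T) \<subseteq> K.\<close>

section \<open>Real codes of compact metric spaces\<close>

text \<open>Base 4 with digits 0 and 1, so that the first differing digit outweighs the whole tail.\<close>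
definition quarter_code :: "(nat \<Rightarrow> bool) \<Rightarrow> real" where
  "quarter_code b = (\<Sum>i. of_bool (b i) * (1/4)^i)"

lemma summable_quarter_code: "summable (\<lambda>i. of_bool (b i) * (1/4::real)^i)"
  by (rule summable_comparison_test[where g="\<lambda>i. (1/4::real)^i"]) (auto intro: summable_geometric)

lemma quarter_code_bounds: "0 \<le> quarter_code b \<and> quarter_code b \<le> 2"
proof
  show "0 \<le> quarter_code b"
    unfolding quarter_code_def by (intro suminf_nonneg summable_quarter_code) auto
  have "quarter_code b \<le> (\<Sum>i. (1/4::real)^i)"
    unfolding quarter_code_def by (intro suminf_le summable_quarter_code) (auto intro: summable_geometric)
  also have "\<dots> = 4/3" by (subst suminf_geometric) auto
  finally show "quarter_code b \<le> 2" by simp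
qed

lemma quarter_code_first_difference:
  assumes "\<And>i. i < k \<Longrightarrow> b i = b' i" "b k \<noteq> b' k"
  shows "(2/3) * (1/4::real)^k \<le> \<bar>quarter_code b - quarter_code b'\<bar>"
proof -
  define c where "c i = (of_bool (b i) - of_bool (b' i)) * (1/4::real)^i" for i
  have abs_c: "\<bar>c i\<bar> \<le> (1/4)^i" for i by (auto simp: c_def)
  have "summable c" unfolding c_def left_diff_distrib by (intro summable_diff summable_quarter_code)
  then have "(\<lambda>i. c (i + Suc k)) sums (suminf c - c k)"
    using sums_iff_shift[of c "Suc k"] assms(1) by (simp add: summable_sums c_def)
  moreover have "quarter_code b - quarter_code b' = suminf c"
    unfolding quarter_code_def c_def left_diff_distrib by (rule suminf_diff[OF summable_quarter_code summable_quarter_code])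
  ultimately have decomp: "quarter_code b - quarter_code b' = c k + (\<Sum>i. c (i + Suc k))"
    by (simp add: sums_iff)
  have geom: "(\<lambda>i. (1/4::real)^(i + Suc k)) sums ((1/3) * (1/4)^k)"
    using sums_mult2[OF geometric_sums[of "1/4::real"], of "(1/4)^Suc k"] by (simp add: power_add)
  have tail: "summable (\<lambda>i. \<bar>c (i + Suc k)\<bar>)"
    by (rule summable_comparison_test[OF _ sums_summable[OF geom]], rule exI[of _ 0])
      (metis abs_c abs_idempotent real_norm_def)
  have "\<bar>\<Sum>i. c (i + Suc k)\<bar> \<le> (\<Sum>i. \<bar>c (i + Suc k)\<bar>)"
    by (rule summable_rabs[OF tail])
  also have "\<dots> \<le> (\<Sum>i. (1/4::real)^(i + Suc k))"
    by (rule suminf_le[OF _ tail sums_summable[OF geom]]) (rule abs_c)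
  also have "\<dots> = (1/3) * (1/4)^k"
    using geom by (rule sums_unique[symmetric])
  finally have "\<bar>\<Sum>i. c (i + Suc k)\<bar> \<le> (1/3) * (1/4)^k" .
  moreover have "\<bar>c k\<bar> = (1/4)^k" using assms(2) by (auto simp: c_def)
  ultimately have "(2/3) * (1/4::real)^k \<le> \<bar>c k\<bar> - \<bar>\<Sum>i. c (i + Suc k)\<bar>" by simp
  also have "\<dots> \<le> \<bar>c k + (\<Sum>i. c (i + Suc k))\<bar>"
    by (metis abs_minus_cancel abs_triangle_ineq2 diff_minus_eq_add)
  finally show ?thesis unfolding decomp .
qed

lemma quarter_code_difference:
  assumes "b j \<noteq> b' j"
  shows "(2/3) * (1/4::real)^j \<le> \<bar>quarter_code b - quarter_code b'\<bar>"
proof -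
  define k where "k = (LEAST i. b i \<noteq> b' i)"
  have "k \<le> j" unfolding k_def using assms by (rule Least_le)
  then have "(2/3) * (1/4::real)^j \<le> (2/3) * (1/4)^k" by (intro mult_left_mono power_decreasing) auto
  also have "\<dots> \<le> \<bar>quarter_code b - quarter_code b'\<bar>"
  proof (rule quarter_code_first_difference)
    show "b k \<noteq> b' k" unfolding k_def using assms by (rule LeastI)
    show "\<And>i. i < k \<Longrightarrow> b i = b' i" unfolding k_def using not_less_Least by blast
  qed
  finally show ?thesis .
qed

lemma compact_finite_nets:
  fixes X :: "'a::metric_space set"
  assumes "compact X"
  obtains net :: "nat \<Rightarrow> 'a list" where "\<And>m. set (net m) \<subseteq> X"
    "\<And>m. X \<subseteq> (\<Union>p\<in>set (net m). ball p (1 / real (Suc m)))"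
proof -
  have "\<exists>l. set l \<subseteq> X \<and> X \<subseteq> (\<Union>p\<in>set l. ball p (1 / real (Suc m)))" for m
  proof -
    have "X \<subseteq> (\<Union>x\<in>X. ball x (1 / real (Suc m)))" by auto
    then obtain k where "k \<subseteq> X" "finite k" "X \<subseteq> (\<Union>x\<in>k. ball x (1 / real (Suc m)))"
      using compactE_image[OF assms, of X "\<lambda>x. ball x (1 / real (Suc m))"] by blast
    then show ?thesis using finite_list[OF \<open>finite k\<close>] by metis
  qed
  then show ?thesis using that by metis
qed

lemma prod_encode_mono_fst: "i \<le> i' \<Longrightarrow> prod_encode (i, m) \<le> prod_encode (i', m)"
  unfolding prod_encode_def by (simp add: triangle_def) (intro add_mono div_le_mono mult_mono; simp)

text \<open>A point is coded by the list of small balls (from finite nets of every mesh) containing it.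
  The code is not continuous, but points with close codes lie in the same ball of a fine net.\<close>
lemma compact_real_code:
  fixes X :: "'a::metric_space set"
  assumes "compact X"
  obtains e :: "'a \<Rightarrow> real" where "\<And>y. 0 \<le> e y \<and> e y \<le> 2"
    and "\<And>\<epsilon>. \<epsilon> > 0 \<Longrightarrow> \<exists>\<delta>>0. \<forall>y\<in>X. \<forall>y'\<in>X. \<bar>e y - e y'\<bar> < \<delta> \<longrightarrow> dist y y' < \<epsilon>"
proof -
  obtain net where net: "\<And>m. set (net m) \<subseteq> X"
      "\<And>m. X \<subseteq> (\<Union>p\<in>set (net m). ball p (1 / real (Suc m)))"
    using compact_finite_nets[OF assms] by blast
  define B where "B j = (case prod_decode j of (i, m) \<Rightarrow>
      if i < length (net m) then ball (net m ! i) (1 / real (Suc m)) else {})" for j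
  define e where "e y = quarter_code (\<lambda>j. y \<in> B j)" for y
  show thesis
  proof (rule that)
    show "0 \<le> e y \<and> e y \<le> 2" for y unfolding e_def by (rule quarter_code_bounds)
  next
    fix \<epsilon> :: real assume "\<epsilon> > 0"
    obtain m where m: "2 / real (Suc m) < \<epsilon>"
    proof -
      obtain n where "2 / \<epsilon> < real n" using reals_Archimedean2 by blast
      with \<open>\<epsilon> > 0\<close> have "2 / real (Suc n) < \<epsilon>" by (simp add: field_simps)
      then show ?thesis by (rule that)
    qed
    define J where "J = prod_encode (length (net m), m)"
    have "dist y y' < \<epsilon>" if y: "y \<in> X" "y' \<in> X" and close: "\<bar>e y - e y'\<bar> < (2/3) * (1/4)^J" for y y'
    proof -
      obtain p where "p \<in> set (net m)" "y \<in> ball p (1 / real (Suc m))" using net(2)[of m] y by blast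
      then obtain i where i: "i < length (net m)" "y \<in> ball (net m ! i) (1 / real (Suc m))"
        by (metis in_set_conv_nth)
      define j where "j = prod_encode (i, m)"
      have Bj: "B j = ball (net m ! i) (1 / real (Suc m))" using i by (simp add: B_def j_def)
      have "j \<le> J" unfolding j_def J_def using i by (intro prod_encode_mono_fst) simp
      then have "(2/3) * (1/4::real)^J \<le> (2/3) * (1/4)^j" by (intro mult_left_mono power_decreasing) auto
      have "y' \<in> B j"
      proof (rule ccontr)
        assume "y' \<notin> B j"
        then have "(2/3) * (1/4::real)^j \<le> \<bar>e y - e y'\<bar>"
          unfolding e_def using i(2) Bj by (intro quarter_code_difference) simp
        with close \<open>(2/3) * (1/4::real)^J \<le> (2/3) * (1/4)^j\<close> show False by linarith
      qed
      then have "dist (net m ! i) y' < 1 / real (Suc m)" using Bj by simp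
      moreover have "dist (net m ! i) y < 1 / real (Suc m)" using i(2) by simp
      ultimately have "dist y y' < 2 / real (Suc m)" using dist_triangle3[of y y' "net m ! i"] by simp
      with m show ?thesis by simp
    qed
    then show "\<exists>\<delta>>0. \<forall>y\<in>X. \<forall>y'\<in>X. \<bar>e y - e y'\<bar> < \<delta> \<longrightarrow> dist y y' < \<epsilon>"
      by (intro exI[of _ "(2/3) * (1/4)^J"]) auto
  qed
qed

lemma mcomplete_of_submetric_compact:
  assumes "compact X"
  shows "mcomplete_of (submetric euclidean_metric X)"
proof -
  have "compact_space (mtopology_of (submetric euclidean_metric X))"
    using assms by (simp add: mtopology_of_submetric compact_space_subtopology)
  then show ?thesis
    unfolding mcomplete_of_def mtopology_of_def
    by (rule Metric_space.compact_space_imp_mcomplete[OF Metric_space_mspace_mdist])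
qed

lemma uniformly_continuous_on_extends_to_closure_compact:
  fixes f :: "'b::metric_space \<Rightarrow> 'a::metric_space"
  assumes "uniformly_continuous_on S f" "f ` S \<subseteq> X" "compact X"
  obtains g where "continuous_on (closure S) g" "g ` closure S \<subseteq> X" "\<And>x. x \<in> S \<Longrightarrow> g x = f x"
proof -
  have "Cauchy_continuous_map (submetric euclidean_metric S) (submetric euclidean_metric X) f"
    using assms(1,2)
    by (auto simp: Cauchy_continuous_map_into_submetric uniformly_continuous_imp_Cauchy_continuous)
  then obtain g where g: "continuous_map (subtopology (mtopology_of euclidean_metric)
        (mtopology_of euclidean_metric closure_of S)) (mtopology_of (submetric euclidean_metric X)) g"
      and gf: "\<And>x. x \<in> S \<Longrightarrow> g x = f x"
    by (rule Cauchy_continuous_map_extends_to_continuous_closure_of[OF mcomplete_of_submetric_compact[OF assms(3)]])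
      blast
  show ?thesis
    by (rule that[of g]) (use g gf in \<open>auto simp: mtopology_of_submetric continuous_map_in_subtopology\<close>)
qed

lemma real_code_continuous_decoding:
  fixes X :: "'a::metric_space set" and e :: "'a \<Rightarrow> real"
  assumes "compact X"
    and code: "\<And>\<epsilon>. \<epsilon> > 0 \<Longrightarrow> \<exists>\<delta>>0. \<forall>y\<in>X. \<forall>y'\<in>X. \<bar>e y - e y'\<bar> < \<delta> \<longrightarrow> dist y y' < \<epsilon>"
  obtains \<psi> where "continuous_on (closure (e ` X)) \<psi>" "\<psi> ` closure (e ` X) \<subseteq> X" "\<And>y. y \<in> X \<Longrightarrow> \<psi> (e y) = y"
proof -
  have "inj_on e X"
  proof (rule inj_onI)
    fix y y' assume "y \<in> X" "y' \<in> X" "e y = e y'"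
    then have "dist y y' < \<epsilon>" if "\<epsilon> > 0" for \<epsilon>
      using code[OF that] by fastforce
    then show "y = y'" by (metis dist_eq_0_iff dist_nz less_irrefl)
  qed
  then have decode: "inv_into X e (e y) = y" if "y \<in> X" for y using that by simp
  have "uniformly_continuous_on (e ` X) (inv_into X e)"
    unfolding uniformly_continuous_on_def
  proof safe
    fix \<epsilon> :: real assume "\<epsilon> > 0"
    then obtain \<delta> where "\<delta> > 0" "\<forall>y\<in>X. \<forall>y'\<in>X. \<bar>e y - e y'\<bar> < \<delta> \<longrightarrow> dist y y' < \<epsilon>"
      using code by blast
    then show "\<exists>\<delta>>0. \<forall>t\<in>e ` X. \<forall>t'\<in>e ` X. dist t' t < \<delta> \<longrightarrow> dist (inv_into X e t') (inv_into X e t) < \<epsilon>"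
      by (auto simp: decode dist_real_def intro!: exI[of _ \<delta>])
  qed
  moreover have "inv_into X e ` e ` X \<subseteq> X" using decode by auto
  ultimately obtain \<psi> where \<psi>: "continuous_on (closure (e ` X)) \<psi>" "\<psi> ` closure (e ` X) \<subseteq> X"
      and extends: "\<And>t. t \<in> e ` X \<Longrightarrow> \<psi> t = inv_into X e t"
    by (rule uniformly_continuous_on_extends_to_closure_compact[OF _ _ assms(1)]) blast
  have "\<psi> (e y) = y" if "y \<in> X" for y
    using extends[of "e y"] decode[OF that] that by simp
  with \<psi> show ?thesis by (rule that)
qed

section \<open>Continuous approximations of indicators\<close>

definition approx_indicator :: "'a::metric_space set \<Rightarrow> nat \<Rightarrow> 'a \<Rightarrow> real" where
  "approx_indicator F m y = max 0 (1 - real (Suc m) * infdist y F)"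

lemma isCont_approx_indicator: "isCont (approx_indicator F m) y"
  unfolding approx_indicator_def by (intro continuous_intros continuous_infdist)

lemma continuous_on_approx_indicator: "continuous_on S (approx_indicator F m)"
  by (intro continuous_at_imp_continuous_on ballI isCont_approx_indicator)

lemma borel_measurable_approx_indicator [measurable]: "approx_indicator F m \<in> borel_measurable borel"
  by (intro borel_measurable_continuous_onI continuous_on_approx_indicator)

lemma approx_indicator_bounds: "0 \<le> approx_indicator F m y" "approx_indicator F m y \<le> 1"
  unfolding approx_indicator_def using infdist_nonneg[of y F] by auto

lemma abs_approx_indicator_le_1: "\<bar>approx_indicator F m y\<bar> \<le> 1"
  using approx_indicator_bounds[of F m y] by simp

lemma approx_indicator_eq_1: "y \<in> F \<Longrightarrow> approx_indicator F m y = 1"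
  by (simp add: approx_indicator_def)

lemma indicator_le_approx_indicator: "indicator F y \<le> approx_indicator F m y"
  by (auto simp: indicator_def approx_indicator_eq_1 approx_indicator_bounds)

lemma approx_indicator_tendsto:
  assumes "closed F" "F \<noteq> {}"
  shows "(\<lambda>m. approx_indicator F m y) \<longlonglongrightarrow> indicator F y"
proof (cases "y \<in> F")
  case True then show ?thesis by (simp add: approx_indicator_eq_1)
next
  case False
  then have pos: "infdist y F > 0" using infdist_pos_not_in_closed assms by blast
  obtain N where N: "1 / infdist y F < real N" using reals_Archimedean2 by blast
  have "approx_indicator F m y = 0" if "m \<ge> N" for m
  proof -
    have "1 < real N * infdist y F" using N pos by (simp add: field_simps)
    also have "\<dots> \<le> real (Suc m) * infdist y F" using that pos by (intro mult_right_mono) auto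
    finally show ?thesis by (simp add: approx_indicator_def)
  qed
  then have "eventually (\<lambda>m. approx_indicator F m y = 0) sequentially"
    by (auto simp: eventually_sequentially)
  then show ?thesis using False by (simp add: tendsto_eventually)
qed

lemma integral_approx_indicator_tendsto:
  assumes "finite_measure M" "h \<in> M \<rightarrow>\<^sub>M borel" "closed F" "F \<noteq> {}"
  shows "(\<lambda>m. \<integral>z. approx_indicator F m (h z) \<partial>M) \<longlonglongrightarrow> measure M (h -` F \<inter> space M)"
proof -
  have "(\<lambda>m. \<integral>z. approx_indicator F m (h z) \<partial>M) \<longlonglongrightarrow> (\<integral>z. indicator F (h z) \<partial>M)"
  proof (rule integral_dominated_convergence[where w="\<lambda>_. 1"])
    have "F \<in> sets borel" using assms(3) by measurable
    then show "(\<lambda>z. indicator F (h z) :: real) \<in> borel_measurable M" using assms(2) by measurable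
    show "(\<lambda>z. approx_indicator F m (h z)) \<in> borel_measurable M" for m using assms(2) by measurable
    show "integrable M (\<lambda>_. 1::real)" using assms(1) by (rule finite_measure.integrable_const)
    show "AE z in M. (\<lambda>m. approx_indicator F m (h z)) \<longlonglongrightarrow> indicator F (h z)"
      using approx_indicator_tendsto[OF assms(3,4)] by simp
    show "AE z in M. norm (approx_indicator F m (h z)) \<le> 1" for m
      by (intro AE_I2) (simp add: abs_approx_indicator_le_1)
  qed
  also have "(\<integral>z. indicator F (h z) \<partial>M) = (\<integral>z. indicator (h -` F \<inter> space M) z \<partial>M)"
    by (intro Bochner_Integration.integral_cong) (auto simp: indicator_def)
  also have "\<dots> = measure M (h -` F \<inter> space M)"
    by simp
  finally show ?thesis .
qed

section \<open>Weak limits of empirical measures\<close>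

lemma tight_uniform_empirical_measures:
  fixes q :: "nat \<Rightarrow> real" and I :: "nat \<Rightarrow> nat set"
  assumes q: "\<And>n. \<bar>q n\<bar> \<le> c" and I: "\<And>k. finite (I k)" "\<And>k. I k \<noteq> {}"
  shows "tight (\<lambda>k. distr (measure_pmf (pmf_of_set (I k))) borel q)"
  unfolding tight_def
proof safe
  show "real_distribution (distr (measure_pmf (pmf_of_set (I k))) borel q)" for k
    unfolding real_distribution_def real_distribution_axioms_def
    by (auto intro!: measure_pmf.prob_space_distr simp: measurable_pmf_measure1)
  fix \<epsilon> :: real assume "\<epsilon> > 0"
  have "measure (distr (measure_pmf (pmf_of_set (I k))) borel q) {-c-1<..c+1} = 1" for k
  proof -
    have "- c - 1 < q n \<and> q n \<le> c + 1" for n using q[of n] by linarith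
    then have "q -` {-c-1<..c+1} \<inter> space (measure_pmf (pmf_of_set (I k))) = UNIV" by auto
    then show ?thesis by (subst measure_distr) (auto simp: measurable_pmf_measure1)
  qed
  then show "\<exists>a b. a < b \<and> (\<forall>k. 1 - \<epsilon> < measure (distr (measure_pmf (pmf_of_set (I k))) borel q) {a<..b})"
    using \<open>\<epsilon> > 0\<close> q[of 0] by (intro exI[of _ "-c-1"] exI[of _ "c+1"]) auto
qed

lemma real_empirical_averages_weak_limit:
  fixes q :: "nat \<Rightarrow> real" and I :: "nat \<Rightarrow> nat set"
  assumes q: "\<And>n. \<bar>q n\<bar> \<le> c" and I: "\<And>k. finite (I k)" "\<And>k. I k \<noteq> {}"
  obtains r \<rho> where "strict_mono r" "real_distribution \<rho>"
    "\<And>h B. (\<And>t. isCont h t) \<Longrightarrow> (\<And>t. norm (h t) \<le> B) \<Longrightarrow>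
       (\<lambda>j. (\<Sum>n\<in>I (r j). h (q n)) / card (I (r j))) \<longlonglongrightarrow> (\<integral>t. h t \<partial>\<rho>)"
proof -
  define \<rho>s where "\<rho>s k = distr (measure_pmf (pmf_of_set (I k))) borel q" for k
  have tight: "tight \<rho>s" unfolding \<rho>s_def using q I by (rule tight_uniform_empirical_measures)
  then obtain r \<rho> where r: "strict_mono r" and \<rho>: "real_distribution \<rho>" and wc: "weak_conv_m (\<rho>s \<circ> id \<circ> r) \<rho>"
    using tight_imp_convergent_subsubsequence[OF _ strict_mono_id] by blast
  have integral: "(\<integral>t. h t \<partial>\<rho>s k) = (\<Sum>n\<in>I k. h (q n)) / card (I k)"
    if "h \<in> borel_measurable borel" for h k
    unfolding \<rho>s_def using that I by (simp add: integral_distr measurable_pmf_measure1 integral_pmf_of_set)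
  have "(\<lambda>j. (\<Sum>n\<in>I (r j). h (q n)) / card (I (r j))) \<longlonglongrightarrow> (\<integral>t. h t \<partial>\<rho>)"
    if hc: "\<And>t. isCont h t" and hB: "\<And>t. norm (h t) \<le> B" for h B
  proof -
    have "(\<lambda>j. \<integral>t. h t \<partial>(\<rho>s \<circ> id \<circ> r) j) \<longlonglongrightarrow> (\<integral>t. h t \<partial>\<rho>)"
      using tight unfolding tight_def by (intro weak_conv_imp_integral_bdd_continuous_conv[OF _ \<rho> wc hc hB]) simp
    moreover have "h \<in> borel_measurable borel"
      using hc by (intro borel_measurable_continuous_onI continuous_at_imp_continuous_on) auto
    ultimately show ?thesis by (simp add: integral)
  qed
  with r \<rho> show ?thesis by (rule that)
qed

lemma averages_limit_AE_in_closed: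
  fixes q :: "nat \<Rightarrow> real" and I :: "nat \<Rightarrow> nat set"
  assumes \<rho>: "real_distribution \<rho>" and Z: "closed Z" "\<And>n. q n \<in> Z"
    and I: "\<And>k. finite (I k)" "\<And>k. I k \<noteq> {}"
    and lim: "\<And>h B. (\<And>t. isCont h t) \<Longrightarrow> (\<And>t. norm (h t) \<le> B) \<Longrightarrow>
       (\<lambda>j. (\<Sum>n\<in>I (r j). h (q n)) / card (I (r j))) \<longlonglongrightarrow> (\<integral>t. h t \<partial>\<rho>)"
  shows "AE t in \<rho>. t \<in> Z"
proof -
  interpret \<rho>: real_distribution \<rho> by (rule \<rho>)
  have "(\<lambda>j. (\<Sum>n\<in>I (r j). approx_indicator Z m (q n)) / card (I (r j))) = (\<lambda>j. 1)" for m
    using I by (simp add: approx_indicator_eq_1[OF Z(2)])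
  then have "(\<integral>t. approx_indicator Z m t \<partial>\<rho>) = 1" for m
    using lim[of "approx_indicator Z m" 1]
    by (simp add: isCont_approx_indicator abs_approx_indicator_le_1 LIMSEQ_const_iff)
  moreover have "(\<lambda>m. \<integral>t. approx_indicator Z m (id t) \<partial>\<rho>) \<longlonglongrightarrow> measure \<rho> (id -` Z \<inter> space \<rho>)"
    using Z Z(2)[of 0] by (intro integral_approx_indicator_tendsto \<rho>.finite_measure) auto
  ultimately have "measure \<rho> Z = 1"
    using sets_eq_imp_space_eq[OF \<rho>.events_eq_borel] by (simp add: LIMSEQ_const_iff)
  then show ?thesis by (rule \<rho>.AE_prob_1)
qed

lemma averages_limit_continuous_image:
  fixes q :: "nat \<Rightarrow> real" and \<psi> :: "real \<Rightarrow> 'a::metric_space" and G :: "'a \<Rightarrow> real"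
  assumes \<rho>: "real_distribution \<rho>" and Z: "closed Z" "\<And>n. q n \<in> Z" "AE t in \<rho>. t \<in> Z"
    and \<psi>: "\<psi> \<in> borel_measurable borel" "continuous_on Z \<psi>"
    and G: "G \<in> borel_measurable borel" "continuous_on (\<psi> ` Z) G" "\<And>t. t \<in> Z \<Longrightarrow> \<bar>G (\<psi> t)\<bar> \<le> B"
    and lim: "\<And>h B. (\<And>t. isCont h t) \<Longrightarrow> (\<And>t. norm (h t) \<le> B) \<Longrightarrow>
       (\<lambda>j. (\<Sum>n\<in>I (r j). h (q n)) / card (I (r j))) \<longlonglongrightarrow> (\<integral>t. h t \<partial>\<rho>)"
  shows "(\<lambda>j. (\<Sum>n\<in>I (r j). G (\<psi> (q n))) / card (I (r j))) \<longlonglongrightarrow> (\<integral>t. G (\<psi> t) \<partial>\<rho>)"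
proof -
  interpret \<rho>: real_distribution \<rho> by (rule \<rho>)
  have "continuous_on Z (G \<circ> \<psi>)" by (rule continuous_on_compose[OF \<psi>(2) G(2)])
  moreover have "closedin (top_of_set UNIV) Z" using Z(1) by simp
  moreover have "0 \<le> B" using G(3)[OF Z(2)[of 0]] by linarith
  moreover have "norm ((G \<circ> \<psi>) t) \<le> B" if "t \<in> Z" for t using G(3)[OF that] by simp
  ultimately obtain h where h: "continuous_on UNIV h" "\<And>t. t \<in> Z \<Longrightarrow> h t = G (\<psi> t)" "\<And>t. norm (h t) \<le> B"
    by (rule Tietze) auto
  have "(\<lambda>j. (\<Sum>n\<in>I (r j). h (q n)) / card (I (r j))) \<longlonglongrightarrow> (\<integral>t. h t \<partial>\<rho>)"
    using h(1,3) by (intro lim) (auto simp: continuous_on_eq_continuous_at)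
  moreover have "h (q n) = G (\<psi> (q n))" for n using h(2)[OF Z(2)] .
  moreover have "(\<integral>t. h t \<partial>\<rho>) = (\<integral>t. G (\<psi> t) \<partial>\<rho>)"
  proof (rule integral_cong_AE)
    show "h \<in> borel_measurable \<rho>"
      using h(1) by (simp add: measurable_cong_sets[OF \<rho>.events_eq_borel refl] borel_measurable_continuous_onI)
    show "(\<lambda>t. G (\<psi> t)) \<in> borel_measurable \<rho>"
      using \<psi>(1) G(1) by (simp add: measurable_cong_sets[OF \<rho>.events_eq_borel refl])
    show "AE t in \<rho>. h t = G (\<psi> t)" using Z(3) by eventually_elim (rule h(2))
  qed
  ultimately show ?thesis by simp
qed

text \<open>Helly's selection theorem is only available on the real line, so the empirical measures are
  transported there by a real code with continuous inverse, and the limit is pulled back.\<close>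
lemma empirical_averages_weak_limit:
  fixes X :: "'a::metric_space set" and p :: "nat \<Rightarrow> 'a" and I :: "nat \<Rightarrow> nat set"
  assumes X: "compact X" and p: "\<And>n. p n \<in> X" and I: "\<And>k. finite (I k)" "\<And>k. I k \<noteq> {}"
  obtains r \<mu> where "strict_mono r" "sets \<mu> = sets borel" "prob_space \<mu>" "emeasure \<mu> X = 1"
    "\<And>G B. G \<in> borel_measurable borel \<Longrightarrow> continuous_on X G \<Longrightarrow> (\<And>y. y \<in> X \<Longrightarrow> \<bar>G y\<bar> \<le> B) \<Longrightarrow>
       (\<lambda>j. (\<Sum>n\<in>I (r j). G (p n)) / card (I (r j))) \<longlonglongrightarrow> (\<integral>y. G y \<partial>\<mu>)"
proof -
  obtain e :: "'a \<Rightarrow> real" where e_bounds: "\<And>y. 0 \<le> e y \<and> e y \<le> 2"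
    and code: "\<And>\<epsilon>. \<epsilon> > 0 \<Longrightarrow> \<exists>\<delta>>0. \<forall>y\<in>X. \<forall>y'\<in>X. \<bar>e y - e y'\<bar> < \<delta> \<longrightarrow> dist y y' < \<epsilon>"
    using compact_real_code[OF X] by blast
  define Z where "Z = closure (e ` X)"
  obtain \<psi> where \<psi>: "continuous_on Z \<psi>" "\<psi> ` Z \<subseteq> X" and decode: "\<And>y. y \<in> X \<Longrightarrow> \<psi> (e y) = y"
    using real_code_continuous_decoding[OF X code] unfolding Z_def by blast
  have Z: "closed Z" "\<And>n. e (p n) \<in> Z" unfolding Z_def using p closure_subset by blast+
  have bound: "\<bar>e (p n)\<bar> \<le> 2" for n using e_bounds[of "p n"] by simp
  obtain r \<rho> where r: "strict_mono r" and \<rho>: "real_distribution \<rho>"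
    and lim: "\<And>h B. (\<And>t. isCont h t) \<Longrightarrow> (\<And>t. norm (h t) \<le> B) \<Longrightarrow>
       (\<lambda>j. (\<Sum>n\<in>I (r j). h (e (p n))) / card (I (r j))) \<longlonglongrightarrow> (\<integral>t. h t \<partial>\<rho>)"
    using real_empirical_averages_weak_limit[of "\<lambda>n. e (p n)" 2 I, OF bound I] by blast
  interpret \<rho>: real_distribution \<rho> by (rule \<rho>)
  have AE_Z: "AE t in \<rho>. t \<in> Z"
    by (rule averages_limit_AE_in_closed[of \<rho> Z "\<lambda>n. e (p n)" I r, OF \<rho> Z I lim])
  define \<psi>' where "\<psi>' t = (if t \<in> Z then \<psi> t else p 0)" for t
  have \<psi>'_borel: "\<psi>' \<in> borel_measurable borel"
    unfolding \<psi>'_def using \<psi>(1) Z(1) by (intro borel_measurable_continuous_on_if) auto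
  have \<psi>'_cont: "continuous_on Z \<psi>'" using \<psi>(1) by (rule continuous_on_eq) (simp add: \<psi>'_def)
  have \<psi>'_X: "\<psi>' t \<in> X" for t using \<psi>(2) p by (auto simp: \<psi>'_def)
  have \<psi>'_measurable: "\<psi>' \<in> \<rho> \<rightarrow>\<^sub>M borel"
    using \<psi>'_borel by (simp add: measurable_cong_sets[OF \<rho>.events_eq_borel refl])
  define \<mu> where "\<mu> = distr \<rho> borel \<psi>'"
  interpret \<mu>: prob_space \<mu> unfolding \<mu>_def by (rule \<rho>.prob_space_distr[OF \<psi>'_measurable])
  have "emeasure \<mu> X = emeasure \<rho> (\<psi>' -` X \<inter> space \<rho>)"
    unfolding \<mu>_def using compact_imp_closed[OF X] by (intro emeasure_distr[OF \<psi>'_measurable]) simp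
  also have "\<psi>' -` X \<inter> space \<rho> = space \<rho>" using \<psi>'_X by auto
  finally have \<mu>_X: "emeasure \<mu> X = 1" using \<rho>.emeasure_space_1 by simp
  have "(\<lambda>j. (\<Sum>n\<in>I (r j). G (p n)) / card (I (r j))) \<longlonglongrightarrow> (\<integral>y. G y \<partial>\<mu>)"
    if G: "G \<in> borel_measurable borel" "continuous_on X G" "\<And>y. y \<in> X \<Longrightarrow> \<bar>G y\<bar> \<le> B" for G B
  proof -
    have "(\<lambda>j. (\<Sum>n\<in>I (r j). G (\<psi>' (e (p n)))) / card (I (r j))) \<longlonglongrightarrow> (\<integral>t. G (\<psi>' t) \<partial>\<rho>)"
      using \<psi>'_X
      by (intro averages_limit_continuous_image[of \<rho> Z "\<lambda>n. e (p n)" \<psi>' G B I r,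
            OF \<rho> Z AE_Z \<psi>'_borel \<psi>'_cont G(1) _ _ lim])
        (auto intro: continuous_on_subset[OF G(2)] G(3))
    moreover have "\<psi>' (e (p n)) = p n" for n using Z(2) decode p by (simp add: \<psi>'_def)
    moreover have "(\<integral>t. G (\<psi>' t) \<partial>\<rho>) = (\<integral>y. G y \<partial>\<mu>)"
      unfolding \<mu>_def by (rule integral_distr[symmetric, OF \<psi>'_measurable G(1)])
    ultimately show ?thesis by simp
  qed
  moreover have "sets \<mu> = sets borel" by (simp add: \<mu>_def)
  ultimately show ?thesis using r \<mu>.prob_space_axioms \<mu>_X that by blast
qed

section \<open>Invariant measures from long orbit segments\<close>

lemma tds_funpow_in: "tds X T \<Longrightarrow> x \<in> X \<Longrightarrow> (T^^n) x \<in> X"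
  by (induction n) (auto simp: tds_def)

lemma tds_closed: "tds X T \<Longrightarrow> closed X"
  by (simp add: tds_def compact_imp_closed)

text \<open>T is only continuous on X, hence need not be Borel measurable; extending it by the identity
  off X changes nothing on X, where every invariant measure lives.\<close>
definition extend_by_id :: "'a set \<Rightarrow> ('a \<Rightarrow> 'a) \<Rightarrow> 'a \<Rightarrow> 'a" where
  "extend_by_id X T y = (if y \<in> X then T y else y)"

lemma borel_measurable_extend_by_id:
  assumes "tds X T"
  shows "extend_by_id X T \<in> borel_measurable borel"
  unfolding extend_by_id_def using assms tds_closed[OF assms]
  by (intro borel_measurable_continuous_on_if continuous_on_id) (auto simp: tds_def)

lemma tds_funpow_preimage_sets:
  assumes tds: "tds X T" and A: "A \<in> sets borel"
  shows "{z \<in> X. (T^^n) z \<in> A} \<in> sets borel"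
proof (induction n)
  case 0
  have "{z \<in> X. (T^^0) z \<in> A} = X \<inter> A" by auto
  then show ?case using A tds_closed[OF tds] by (simp add: sets.Int)
next
  case (Suc n)
  from measurable_sets[OF borel_measurable_extend_by_id[OF tds] Suc]
  have "X \<inter> extend_by_id X T -` {z \<in> X. (T^^n) z \<in> A} \<in> sets borel"
    using tds_closed[OF tds] by (intro sets.Int) simp_all
  also have "X \<inter> extend_by_id X T -` {z \<in> X. (T^^n) z \<in> A} = {z \<in> X. (T^^Suc n) z \<in> A}"
    using tds by (auto simp: extend_by_id_def tds_def funpow_swap1)
  finally show ?case .
qed

lemma emeasure_extend_by_id_preimage:
  fixes X :: "'a::metric_space set"
  assumes tds: "tds X T" and \<mu>: "sets \<mu> = sets borel" "prob_space \<mu>" "emeasure \<mu> X = 1"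
    and A: "A \<in> sets borel"
  shows "emeasure \<mu> (extend_by_id X T -` A \<inter> space \<mu>) = emeasure \<mu> {y \<in> X. T y \<in> A}"
proof (rule emeasure_eq_AE)
  interpret prob_space \<mu> by (rule \<mu>(2))
  have space: "space \<mu> = UNIV" using \<mu>(1) sets_eq_imp_space_eq by fastforce
  have "AE y in \<mu>. y \<in> X" using \<mu> tds_closed[OF tds] by (intro AE_prob_1) (simp add: emeasure_eq_measure)
  then show "AE y in \<mu>. (y \<in> extend_by_id X T -` A \<inter> space \<mu>) = (y \<in> {y \<in> X. T y \<in> A})"
    by eventually_elim (auto simp: extend_by_id_def space)
  show "extend_by_id X T -` A \<inter> space \<mu> \<in> sets \<mu>"
    using measurable_sets[OF borel_measurable_extend_by_id[OF tds] A] \<mu>(1) by (simp add: space)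
  show "{y \<in> X. T y \<in> A} \<in> sets \<mu>"
    using tds_funpow_preimage_sets[OF tds A, of 1] \<mu>(1) by simp
qed

lemma prob_space_eqI_closed:
  fixes \<mu> \<nu> :: "'a::metric_space measure"
  assumes sets: "sets \<mu> = sets borel" "sets \<nu> = sets borel" and "prob_space \<mu>" "prob_space \<nu>"
    and closed_eq: "\<And>C. closed C \<Longrightarrow> measure \<mu> C = measure \<nu> C"
  shows "\<mu> = \<nu>"
proof -
  interpret \<mu>: prob_space \<mu> by fact
  interpret \<nu>: prob_space \<nu> by fact
  have sets_closed: "sets (borel :: 'a measure) = sigma_sets UNIV (Collect closed)"
    by (subst borel_eq_closed) (simp add: sets_measure_of)
  show ?thesis
  proof (rule measure_eqI_generator_eq[where E="Collect closed" and \<Omega>=UNIV and A="\<lambda>_. UNIV"])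
    show "Int_stable (Collect closed)" by (auto simp: Int_stable_def)
    show "Collect closed \<subseteq> Pow UNIV" by simp
    show "emeasure \<mu> C = emeasure \<nu> C" if "C \<in> Collect closed" for C
      using closed_eq[of C] that by (simp add: \<mu>.emeasure_eq_measure \<nu>.emeasure_eq_measure)
    show "sets \<mu> = sigma_sets UNIV (Collect closed)" "sets \<nu> = sigma_sets UNIV (Collect closed)"
      using sets sets_closed by simp_all
    show "range (\<lambda>_. UNIV) \<subseteq> Collect closed" "(\<Union>i::nat. UNIV) = UNIV" by auto
    show "emeasure \<mu> UNIV \<noteq> \<infinity>" for i :: nat
      using \<mu>.emeasure_space_1 sets_eq_imp_space_eq[OF sets(1)] by simp
  qed
qed

lemma invariant_probI_closed:
  fixes X :: "'a::metric_space set"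
  assumes tds: "tds X T" and \<mu>: "sets \<mu> = sets borel" "prob_space \<mu>" "emeasure \<mu> X = 1"
    and closed_invariant: "\<And>C. closed C \<Longrightarrow> measure \<mu> {y \<in> X. T y \<in> C} = measure \<mu> C"
  shows "invariant_prob X T \<mu>"
proof -
  interpret prob_space \<mu> by (rule \<mu>(2))
  have T': "extend_by_id X T \<in> \<mu> \<rightarrow>\<^sub>M borel"
    using borel_measurable_extend_by_id[OF tds] by (simp add: measurable_cong_sets[OF \<mu>(1) refl])
  have distr_eq: "emeasure (distr \<mu> borel (extend_by_id X T)) A = emeasure \<mu> {y \<in> X. T y \<in> A}"
    if "A \<in> sets borel" for A
    using emeasure_distr[OF T' that] emeasure_extend_by_id_preimage[OF tds \<mu> that] by simp
  have "distr \<mu> borel (extend_by_id X T) = \<mu>"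
  proof (rule prob_space_eqI_closed)
    show "prob_space (distr \<mu> borel (extend_by_id X T))" by (rule prob_space_distr[OF T'])
    show "measure (distr \<mu> borel (extend_by_id X T)) C = measure \<mu> C" if "closed C" for C
      using distr_eq[of C] closed_invariant[OF that] that by (simp add: measure_def)
  qed (simp_all add: \<mu>)
  with distr_eq have "emeasure \<mu> {y \<in> X. T y \<in> A} = emeasure \<mu> A" if "A \<in> sets borel" for A
    using that by simp
  with \<mu> show ?thesis unfolding invariant_prob_def by blast
qed

lemma real_card_filter_eq_sum:
  assumes "finite A"
  shows "real (card {n \<in> A. P n}) = (\<Sum>n\<in>A. if P n then 1 else 0)"
proof -
  have "(\<Sum>n\<in>A. if P n then 1 else 0) = (\<Sum>n\<in>{n \<in> A. P n}. 1 :: real)"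
    using assms by (rule sum.inter_filter[symmetric])
  then show ?thesis by simp
qed

lemma sum_interval_shift_bound:
  fixes f :: "nat \<Rightarrow> real"
  assumes "\<And>n. \<bar>f n\<bar> \<le> B"
  shows "\<bar>(\<Sum>n\<in>{a..<a+L}. f (Suc n)) - (\<Sum>n\<in>{a..<a+L}. f n)\<bar> \<le> 2 * B"
proof -
  have "(\<Sum>n\<in>{a..<a+L}. f (Suc n)) - (\<Sum>n\<in>{a..<a+L}. f n) = f (a + L) - f a"
    by (subst sum_subtractf[symmetric], subst sum_Suc_diff') simp_all
  then show ?thesis using assms[of "a + L"] assms[of a] abs_triangle_ineq4[of "f (a + L)" "f a"] by simp
qed

text \<open>Along windows of unbounded length, averages of G \<circ> T and of G differ by O(1/length).\<close>
lemma interval_average_limit_shift_invariant: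
  fixes X :: "'a::metric_space set" and G :: "'a \<Rightarrow> real"
  assumes tds: "tds X T" and x: "x \<in> X" and L: "\<And>k. Suc k \<le> L k" and r: "strict_mono r"
    and lim: "\<And>G B. G \<in> borel_measurable borel \<Longrightarrow> continuous_on X G \<Longrightarrow> (\<And>y. y \<in> X \<Longrightarrow> \<bar>G y\<bar> \<le> B) \<Longrightarrow>
       (\<lambda>j. (\<Sum>n\<in>{a (r j)..<a (r j) + L (r j)}. G ((T^^n) x)) / L (r j)) \<longlonglongrightarrow> (\<integral>y. G y \<partial>\<mu>)"
    and G: "G \<in> borel_measurable borel" "continuous_on X G" "\<And>y. y \<in> X \<Longrightarrow> \<bar>G y\<bar> \<le> B"
  shows "(\<integral>y. G (extend_by_id X T y) \<partial>\<mu>) = (\<integral>y. G y \<partial>\<mu>)"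
proof -
  define avg where "avg k H = (\<Sum>n\<in>{a k..<a k + L k}. H ((T^^n) x)) / L k" for k and H :: "'a \<Rightarrow> real"
  have T_X: "T y \<in> X" if "y \<in> X" for y using tds that by (auto simp: tds_def)
  have "continuous_on X (G \<circ> T)"
    using tds G(2) by (intro continuous_on_compose continuous_on_subset[OF G(2)]) (auto simp: tds_def)
  then have GT_cont: "continuous_on X (\<lambda>y. G (extend_by_id X T y))"
    by (rule continuous_on_eq) (simp add: extend_by_id_def)
  have GT_borel: "(\<lambda>y. G (extend_by_id X T y)) \<in> borel_measurable borel"
    using borel_measurable_extend_by_id[OF tds] G(1) by measurable
  have shift: "\<bar>avg k (\<lambda>y. G (extend_by_id X T y)) - avg k G\<bar> \<le> 2 * B / Suc k" for k
  proof -
    define D where "D = (\<Sum>n\<in>{a k..<a k + L k}. G ((T^^Suc n) x)) - (\<Sum>n\<in>{a k..<a k + L k}. G ((T^^n) x))"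
    have "(\<Sum>n\<in>{a k..<a k + L k}. G (extend_by_id X T ((T^^n) x))) = (\<Sum>n\<in>{a k..<a k + L k}. G ((T^^Suc n) x))"
      using tds_funpow_in[OF tds x] by (intro sum.cong) (simp_all add: extend_by_id_def)
    then have "avg k (\<lambda>y. G (extend_by_id X T y)) - avg k G = D / L k"
      unfolding avg_def D_def by (simp only: diff_divide_distrib)
    moreover have "\<bar>D\<bar> \<le> 2 * B"
      unfolding D_def
      by (rule sum_interval_shift_bound[of "\<lambda>n. G ((T^^n) x)"]) (rule G(3)[OF tds_funpow_in[OF tds x]])
    moreover have "0 \<le> B" using G(3)[OF x] by linarith
    then have "\<bar>D\<bar> / L k \<le> 2 * B / Suc k"
      using \<open>\<bar>D\<bar> \<le> 2 * B\<close> L[of k] by (intro frac_le) simp_all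
    ultimately show ?thesis by (simp add: abs_divide)
  qed
  have "(\<lambda>k. 2 * B / Suc k) \<longlonglongrightarrow> 0"
    using tendsto_mult_right_zero[OF LIMSEQ_inverse_real_of_nat, of "2 * B"] by (simp add: divide_inverse)
  then have "(\<lambda>k. avg k (\<lambda>y. G (extend_by_id X T y)) - avg k G) \<longlonglongrightarrow> 0"
    by (rule Lim_null_comparison[rotated]) (use shift in \<open>simp del: of_nat_Suc\<close>)
  then have "(\<lambda>j. avg (r j) (\<lambda>y. G (extend_by_id X T y)) - avg (r j) G) \<longlonglongrightarrow> 0"
    using LIMSEQ_subseq_LIMSEQ[OF _ r] by (simp add: o_def)
  moreover have "(\<lambda>j. avg (r j) (\<lambda>y. G (extend_by_id X T y))) \<longlonglongrightarrow> (\<integral>y. G (extend_by_id X T y) \<partial>\<mu>)"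
    unfolding avg_def by (rule lim[OF GT_borel GT_cont, of B]) (simp add: extend_by_id_def T_X G(3))
  then have "(\<lambda>j. avg (r j) (\<lambda>y. G (extend_by_id X T y)) - avg (r j) G) \<longlonglongrightarrow>
      (\<integral>y. G (extend_by_id X T y) \<partial>\<mu>) - (\<integral>y. G y \<partial>\<mu>)"
    unfolding avg_def by (intro tendsto_diff lim[OF G])
  ultimately have "0 = (\<integral>y. G (extend_by_id X T y) \<partial>\<mu>) - (\<integral>y. G y \<partial>\<mu>)"
    by (rule LIMSEQ_unique)
  then show ?thesis by simp
qed

lemma krylov_bogolyubov:
  fixes X :: "'a::metric_space set"
  assumes tds: "tds X T" and x: "x \<in> X" and L: "\<And>k. Suc k \<le> L k"
  obtains \<mu> r where "invariant_prob X T \<mu>"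
    "\<And>G B. G \<in> borel_measurable borel \<Longrightarrow> continuous_on X G \<Longrightarrow> (\<And>y. y \<in> X \<Longrightarrow> \<bar>G y\<bar> \<le> B) \<Longrightarrow>
       (\<lambda>j. (\<Sum>n\<in>{a (r j)..<a (r j) + L (r j)}. G ((T^^n) x)) / L (r j)) \<longlonglongrightarrow> (\<integral>y. G y \<partial>\<mu>)"
proof -
  have card: "card {a k..<a k + L k} = L k" for k by simp
  obtain r \<mu> where r: "strict_mono r" and \<mu>: "sets \<mu> = sets borel" "prob_space \<mu>" "emeasure \<mu> X = 1"
    and lim: "\<And>G B. G \<in> borel_measurable borel \<Longrightarrow> continuous_on X G \<Longrightarrow> (\<And>y. y \<in> X \<Longrightarrow> \<bar>G y\<bar> \<le> B) \<Longrightarrow>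
       (\<lambda>j. (\<Sum>n\<in>{a (r j)..<a (r j) + L (r j)}. G ((T^^n) x)) / L (r j)) \<longlonglongrightarrow> (\<integral>y. G y \<partial>\<mu>)"
  proof (rule empirical_averages_weak_limit[of X "\<lambda>n. (T^^n) x" "\<lambda>k. {a k..<a k + L k}"])
    show "compact X" using tds by (simp add: tds_def)
    show "(T^^n) x \<in> X" for n by (rule tds_funpow_in[OF tds x])
    show "finite {a k..<a k + L k}" "{a k..<a k + L k} \<noteq> {}" for k using L[of k] by auto
  qed (unfold card, blast)
  interpret \<mu>: prob_space \<mu> by (rule \<mu>(2))
  have T': "extend_by_id X T \<in> \<mu> \<rightarrow>\<^sub>M borel"
    using borel_measurable_extend_by_id[OF tds] by (simp add: measurable_cong_sets[OF \<mu>(1) refl])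
  have "measure \<mu> {y \<in> X. T y \<in> C} = measure \<mu> C" if C: "closed C" for C
  proof (cases "C = {}")
    case False
    have "(\<lambda>m. \<integral>y. approx_indicator C m (extend_by_id X T y) \<partial>\<mu>) \<longlonglongrightarrow> measure \<mu> {y \<in> X. T y \<in> C}"
      using integral_approx_indicator_tendsto[OF \<mu>.finite_measure T' C False]
        emeasure_extend_by_id_preimage[OF tds \<mu>, of C] C by (simp add: measure_def)
    moreover have "(\<integral>y. approx_indicator C m (extend_by_id X T y) \<partial>\<mu>) = (\<integral>y. approx_indicator C m y \<partial>\<mu>)" for m
      by (rule interval_average_limit_shift_invariant[OF tds x L r lim, where B=1])
        (simp_all add: continuous_on_approx_indicator abs_approx_indicator_le_1)
    ultimately have "(\<lambda>m. \<integral>y. approx_indicator C m y \<partial>\<mu>) \<longlonglongrightarrow> measure \<mu> {y \<in> X. T y \<in> C}"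
      by simp
    moreover have "(\<lambda>m. \<integral>y. approx_indicator C m (id y) \<partial>\<mu>) \<longlonglongrightarrow> measure \<mu> (id -` C \<inter> space \<mu>)"
      using \<mu>(1) by (intro integral_approx_indicator_tendsto[OF \<mu>.finite_measure _ C False]) simp
    then have "(\<lambda>m. \<integral>y. approx_indicator C m y \<partial>\<mu>) \<longlonglongrightarrow> measure \<mu> C"
      using sets_eq_imp_space_eq[OF \<mu>(1)] by simp
    ultimately show ?thesis by (rule LIMSEQ_unique)
  qed simp
  then have "invariant_prob X T \<mu>" by (intro invariant_probI_closed[OF tds \<mu>])
  then show ?thesis using lim that by blast
qed

lemma card_filter_le_sum_approx_indicator:
  assumes "finite I"
  shows "real (card {n \<in> I. p n \<in> F}) \<le> (\<Sum>n\<in>I. approx_indicator F m (p n))"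
proof -
  have "real (card {n \<in> I. p n \<in> F}) = (\<Sum>n\<in>I. indicator F (p n))"
    using assms by (simp only: real_card_filter_eq_sum indicator_def of_bool_def)
  also have "\<dots> \<le> (\<Sum>n\<in>I. approx_indicator F m (p n))"
    by (intro sum_mono indicator_le_approx_indicator)
  finally show ?thesis .
qed

lemma invariant_prob_charging_frequently_visited:
  fixes X :: "'a::metric_space set"
  assumes tds: "tds X T" and x: "x \<in> X" and F: "closed F" and L: "\<And>k. Suc k \<le> L k"
    and visits: "\<And>k. \<delta> * L k \<le> real (card {n \<in> {a k..<a k + L k}. (T^^n) x \<in> F})"
  obtains \<mu> where "invariant_prob X T \<mu>" "\<delta> \<le> measure \<mu> F"
proof -
  obtain \<mu> r where \<mu>: "invariant_prob X T \<mu>"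
    and lim: "\<And>G B. G \<in> borel_measurable borel \<Longrightarrow> continuous_on X G \<Longrightarrow> (\<And>y. y \<in> X \<Longrightarrow> \<bar>G y\<bar> \<le> B) \<Longrightarrow>
       (\<lambda>j. (\<Sum>n\<in>{a (r j)..<a (r j) + L (r j)}. G ((T^^n) x)) / L (r j)) \<longlonglongrightarrow> (\<integral>y. G y \<partial>\<mu>)"
    by (rule krylov_bogolyubov[OF tds x L, where a=a]) blast
  interpret prob_space \<mu> using \<mu> by (simp add: invariant_prob_def)
  have sets: "sets \<mu> = sets borel" using \<mu> by (simp add: invariant_prob_def)
  have "\<delta> \<le> measure \<mu> F"
  proof (cases "F = {}")
    case True
    then have "\<delta> * L 0 \<le> 0" using visits[of 0] by simp
    with L[of 0] have "\<delta> \<le> 0" by (simp add: mult_le_0_iff)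
    then show ?thesis using measure_nonneg[of \<mu> F] by linarith
  next
    case False
    have "\<delta> \<le> (\<integral>y. approx_indicator F m y \<partial>\<mu>)" for m
    proof (rule LIMSEQ_le_const)
      show "(\<lambda>j. (\<Sum>n\<in>{a (r j)..<a (r j) + L (r j)}. approx_indicator F m ((T^^n) x)) / L (r j))
          \<longlonglongrightarrow> (\<integral>y. approx_indicator F m y \<partial>\<mu>)"
        by (rule lim[where B=1]) (auto simp: continuous_on_approx_indicator abs_approx_indicator_le_1)
      have "\<delta> \<le> (\<Sum>n\<in>{a k..<a k + L k}. approx_indicator F m ((T^^n) x)) / L k" for k
        using order_trans[OF visits card_filter_le_sum_approx_indicator[where F=F and m=m]] L[of k]
        by (simp add: le_divide_eq)
      then show "\<exists>N. \<forall>j\<ge>N. \<delta> \<le> (\<Sum>n\<in>{a (r j)..<a (r j) + L (r j)}. approx_indicator F m ((T^^n) x)) / L (r j)"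
        by blast
    qed
    moreover have "(\<lambda>m. \<integral>y. approx_indicator F m (id y) \<partial>\<mu>) \<longlonglongrightarrow> measure \<mu> (id -` F \<inter> space \<mu>)"
      using sets by (intro integral_approx_indicator_tendsto[OF finite_measure _ F False]) simp
    then have "(\<lambda>m. \<integral>y. approx_indicator F m y \<partial>\<mu>) \<longlonglongrightarrow> measure \<mu> F"
      using sets_eq_imp_space_eq[OF sets] by simp
    ultimately show ?thesis by (intro LIMSEQ_le_const) auto
  qed
  with \<mu> show ?thesis by (rule that)
qed

section \<open>The support has the density-one property\<close>

lemma closed_supp_tds: "closed (supp_tds X T)"
  unfolding supp_tds_def by (intro closed_Inter) auto

lemma supp_tds_subset_full_measure:
  assumes "closed C" "C \<subseteq> X" "\<And>\<mu>. invariant_prob X T \<mu> \<Longrightarrow> emeasure \<mu> C = 1"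
  shows "supp_tds X T \<subseteq> C"
  unfolding supp_tds_def using assms by (intro Inter_lower) auto

lemma supp_tds_subset: "tds X T \<Longrightarrow> supp_tds X T \<subseteq> X"
  using tds_closed by (intro supp_tds_subset_full_measure) (auto simp: invariant_prob_def)

lemma emeasure_ball_outside_supp_tds:
  fixes X :: "'a::metric_space set"
  assumes \<mu>: "invariant_prob X T \<mu>" and y: "y \<notin> supp_tds X T"
  obtains r where "r > 0" "emeasure \<mu> (ball y r) = 0"
proof -
  have sets: "sets \<mu> = sets borel" and "prob_space \<mu>" using \<mu> by (auto simp: invariant_prob_def)
  interpret prob_space \<mu> by fact
  obtain C where C: "closed C" "\<And>\<mu>. invariant_prob X T \<mu> \<Longrightarrow> emeasure \<mu> C = 1" "y \<notin> C"
    using y unfolding supp_tds_def by blast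
  have "open (- C)" using C(1) by auto
  then obtain r where r: "r > 0" "ball y r \<subseteq> - C" using C(3) open_contains_ball by blast
  have C_sets: "C \<in> sets \<mu>" using C(1) sets by simp
  have "emeasure \<mu> (space \<mu> - C) = emeasure \<mu> (space \<mu>) - emeasure \<mu> C"
    using C_sets by (rule emeasure_compl) simp
  also have "\<dots> = 0" using C(2)[OF \<mu>] by (simp add: emeasure_space_1)
  finally have "emeasure \<mu> (space \<mu> - C) = 0" .
  moreover have "emeasure \<mu> (ball y r) \<le> emeasure \<mu> (space \<mu> - C)"
    using r(2) sets.compl_sets[OF C_sets] sets_eq_imp_space_eq[OF sets] by (intro emeasure_mono) auto
  ultimately show ?thesis using r(1) that by auto
qed

lemma emeasure_compact_disjoint_supp_tds:
  fixes X :: "'a::metric_space set"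
  assumes \<mu>: "invariant_prob X T \<mu>" and "compact F" and disjoint: "F \<inter> supp_tds X T = {}"
  shows "emeasure \<mu> F = 0"
proof -
  have sets: "sets \<mu> = sets borel" using \<mu> by (simp add: invariant_prob_def)
  have "\<forall>y\<in>F. \<exists>r. r > 0 \<and> emeasure \<mu> (ball y r) = 0"
    using emeasure_ball_outside_supp_tds[OF \<mu>] disjoint by (metis disjoint_iff)
  then obtain r where r: "\<forall>y\<in>F. r y > 0 \<and> emeasure \<mu> (ball y (r y)) = 0" by (metis bchoice)
  then have "F \<subseteq> (\<Union>y\<in>F. ball y (r y))" by auto
  then obtain K where K: "K \<subseteq> F" "finite K" "F \<subseteq> (\<Union>y\<in>K. ball y (r y))"
    using compactE_image[OF \<open>compact F\<close>, of F "\<lambda>y. ball y (r y)"] by auto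
  have "open (\<Union>y\<in>K. ball y (r y))" by auto
  then have "emeasure \<mu> F \<le> emeasure \<mu> (\<Union>y\<in>K. ball y (r y))"
    by (intro emeasure_mono[OF K(3)]) (simp add: sets borel_open)
  also have "\<dots> \<le> (\<Sum>y\<in>K. emeasure \<mu> (ball y (r y)))"
    using K(2) by (intro emeasure_subadditive_finite) (auto simp: sets borel_open)
  also have "\<dots> = 0" using K(1) r by (intro sum.neutral) auto
  finally show ?thesis by simp
qed

lemma not_banach_density_one_sparse_windows:
  assumes "\<not> banach_density_one R"
  shows "\<exists>c::real. c < 1 \<and> (\<exists>L a. (\<forall>k. Suc k \<le> L k) \<and> (\<forall>k. card (R \<inter> {a k..<a k + L k}) < c * L k))"
proof -
  obtain c :: real where "c < 1"
    and not_N: "\<not> (\<exists>N\<ge>1. \<forall>a L. L \<ge> N \<longrightarrow> c * L \<le> real (card (R \<inter> {a..<a+L})))"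
    using assms unfolding banach_density_one_def by blast
  have "\<exists>w. Suc k \<le> snd w \<and> real (card (R \<inter> {fst w..<fst w + snd w})) < c * snd w" for k
  proof (rule ccontr)
    assume "\<not> ?thesis"
    then have "\<forall>a L. L \<ge> Suc k \<longrightarrow> c * L \<le> real (card (R \<inter> {a..<a+L}))"
      by (metis fst_conv not_less snd_conv)
    then have "\<exists>N\<ge>1. \<forall>a L. L \<ge> N \<longrightarrow> c * L \<le> real (card (R \<inter> {a..<a+L}))"
      by (intro exI[of _ "Suc k"]) simp
    with not_N show False by blast
  qed
  then obtain w where "\<forall>k. Suc k \<le> snd (w k) \<and> real (card (R \<inter> {fst (w k)..<fst (w k) + snd (w k)})) < c * snd (w k)"
    using choice[of "\<lambda>k w. Suc k \<le> snd w \<and> real (card (R \<inter> {fst w..<fst w + snd w})) < c * snd w"] by blast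
  with \<open>c < 1\<close> show ?thesis
    by (intro exI[of _ c] conjI exI[of _ "\<lambda>k. snd (w k)"] exI[of _ "\<lambda>k. fst (w k)"]) simp_all
qed

lemma density_one_property_supp_tds:
  fixes X :: "'a::metric_space set"
  assumes tds: "tds X T"
  shows "density_one_property X T (supp_tds X T)"
  unfolding density_one_property_def
proof (intro ballI allI impI, elim conjE, rule ccontr)
  fix x U assume x: "x \<in> X" and U: "open U" "supp_tds X T \<subseteq> U"
    and not_dense: "\<not> banach_density_one (return_times T x U)"
  obtain c :: real and L a where c: "c < 1" and L: "\<forall>k. Suc k \<le> L k"
    and sparse: "\<forall>k. real (card (return_times T x U \<inter> {a k..<a k + L k})) < c * L k"
    using not_banach_density_one_sparse_windows[OF not_dense] by (elim exE conjE)
  define F where "F = X - U"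
  have "compact F" unfolding F_def using tds U(1) by (simp add: tds_def Diff_eq compact_Int_closed closed_Compl)
  have visits: "(1 - c) * L k \<le> real (card {n \<in> {a k..<a k + L k}. (T^^n) x \<in> F})" for k
  proof -
    let ?I = "{a k..<a k + L k}" and ?R = "return_times T x U \<inter> {a k..<a k + L k}"
    have "{n \<in> ?I. (T^^n) x \<in> F} = ?I - ?R"
      using tds_funpow_in[OF tds x] by (auto simp: F_def return_times_def)
    then have "card {n \<in> ?I. (T^^n) x \<in> F} = L k - card ?R" by (simp add: card_Diff_subset)
    moreover have "card ?R \<le> L k" using card_mono[of ?I ?R] by simp
    ultimately show ?thesis using sparse[rule_format, of k] by (simp add: of_nat_diff algebra_simps)
  qed
  obtain \<mu> where \<mu>: "invariant_prob X T \<mu>" "1 - c \<le> measure \<mu> F"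
    by (rule invariant_prob_charging_frequently_visited[OF tds x compact_imp_closed[OF \<open>compact F\<close>]
          L[rule_format] visits])
  have "emeasure \<mu> F = 0"
    using U(2) by (intro emeasure_compact_disjoint_supp_tds[OF \<mu>(1) \<open>compact F\<close>]) (auto simp: F_def)
  with \<mu>(2) c show False by (simp add: measure_def)
qed

section \<open>Minimality of the support\<close>

lemma invariant_prob_funpow:
  assumes tds: "tds X T" and \<mu>: "invariant_prob X T \<mu>" and A: "A \<in> sets borel"
  shows "emeasure \<mu> {z \<in> X. (T^^n) z \<in> A} = emeasure \<mu> A"
proof (induction n)
  case 0
  interpret prob_space \<mu> using \<mu> by (simp add: invariant_prob_def)
  have sets: "sets \<mu> = sets borel" using \<mu> by (simp add: invariant_prob_def)
  have "AE z in \<mu>. z \<in> X"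
    using \<mu> tds_closed[OF tds] by (intro AE_prob_1) (simp add: invariant_prob_def emeasure_eq_measure)
  then show ?case
    using A tds_funpow_preimage_sets[OF tds A, of 0] by (intro emeasure_eq_AE) (auto simp: sets)
next
  case (Suc n)
  have invariant: "emeasure \<mu> {x \<in> X. T x \<in> B} = emeasure \<mu> B" if "B \<in> sets borel" for B
    using \<mu> that by (simp add: invariant_prob_def)
  have "{z \<in> X. (T^^Suc n) z \<in> A} = {z \<in> X. T z \<in> {z \<in> X. (T^^n) z \<in> A}}"
    using tds by (auto simp: tds_def funpow_swap1)
  then show ?case
    using invariant[OF tds_funpow_preimage_sets[OF tds A, of n]] Suc by simp
qed

lemma banach_density_one_initial_frequency:
  assumes "banach_density_one R"
  shows "(\<lambda>L. real (card (R \<inter> {0..<Suc L})) / Suc L) \<longlonglongrightarrow> 1"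
proof (rule LIMSEQ_I)
  fix \<epsilon> :: real assume "\<epsilon> > 0"
  obtain N where N: "\<forall>a L. L \<ge> N \<longrightarrow> (1 - \<epsilon>/2) * L \<le> real (card (R \<inter> {a..<a+L}))"
  proof -
    have "1 - \<epsilon>/2 < 1" using \<open>\<epsilon> > 0\<close> by simp
    then show ?thesis using assms that unfolding banach_density_one_def by blast
  qed
  have "norm (real (card (R \<inter> {0..<Suc L})) / Suc L - 1) < \<epsilon>" if "L \<ge> N" for L
  proof -
    have "(1 - \<epsilon>/2) * Suc L \<le> real (card (R \<inter> {0..<Suc L}))"
      using N that by (metis add_0 le_SucI)
    then have "1 - \<epsilon>/2 \<le> real (card (R \<inter> {0..<Suc L})) / Suc L"
      by (simp add: field_simps)
    moreover have "card (R \<inter> {0..<Suc L}) \<le> card {0..<Suc L}" by (intro card_mono) auto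
    then have "real (card (R \<inter> {0..<Suc L})) / Suc L \<le> 1" by (simp add: field_simps)
    ultimately show ?thesis using \<open>\<epsilon> > 0\<close> by (simp add: abs_if)
  qed
  then show "\<exists>N. \<forall>L\<ge>N. norm (real (card (R \<inter> {0..<Suc L})) / Suc L - 1) < \<epsilon>" by blast
qed

lemma integral_sum_indicator_funpow_preimages:
  fixes X :: "'a::metric_space set"
  assumes tds: "tds X T" and \<mu>: "invariant_prob X T \<mu>" and A: "A \<in> sets borel"
  shows "(\<integral>y. (\<Sum>n<N. indicator {z \<in> X. (T^^n) z \<in> A} y) \<partial>\<mu>) = N * measure \<mu> A"
proof -
  interpret prob_space \<mu> using \<mu> by (simp add: invariant_prob_def)
  have sets: "{z \<in> X. (T^^n) z \<in> A} \<in> sets \<mu>" for n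
    using tds_funpow_preimage_sets[OF tds A] \<mu> by (simp add: invariant_prob_def)
  have "(\<integral>y. (\<Sum>n<N. indicator {z \<in> X. (T^^n) z \<in> A} y) \<partial>\<mu>)
      = (\<Sum>n<N. (\<integral>y. indicator {z \<in> X. (T^^n) z \<in> A} y \<partial>\<mu>) :: real)"
    using sets by (intro Bochner_Integration.integral_sum integrable_real_indicator) (simp_all add: emeasure_eq_measure)
  also have "\<dots> = (\<Sum>n<N. measure \<mu> A)"
    using sets invariant_prob_funpow[OF tds \<mu> A] by (intro sum.cong refl) (simp add: measure_def)
  finally show ?thesis by simp
qed

lemma sum_indicator_funpow_preimages_eq_card:
  assumes "y \<in> X"
  shows "(\<Sum>n<N. indicator {z \<in> X. (T^^n) z \<in> U} y) = real (card (return_times T y U \<inter> {0..<N}))"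
proof -
  have "return_times T y U \<inter> {0..<N} = {n \<in> {..<N}. (T^^n) y \<in> U}"
    by (auto simp: return_times_def)
  moreover have "(\<Sum>n<N. indicator {z \<in> X. (T^^n) z \<in> U} y) = (\<Sum>n<N. if (T^^n) y \<in> U then 1 else 0 :: real)"
    using assms by (intro sum.cong) auto
  ultimately show ?thesis by (simp only: real_card_filter_eq_sum finite_lessThan)
qed

lemma invariant_prob_return_dense_open_full:
  fixes X :: "'a::metric_space set"
  assumes tds: "tds X T" and \<mu>: "invariant_prob X T \<mu>" and U: "open U"
    and dense: "\<And>x. x \<in> X \<Longrightarrow> banach_density_one (return_times T x U)"
  shows "measure \<mu> U = 1"
proof -
  interpret prob_space \<mu> using \<mu> by (simp add: invariant_prob_def)
  define P where "P n = {z \<in> X. (T^^n) z \<in> U}" for n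
  have P_sets [measurable]: "P n \<in> sets \<mu>" for n
    unfolding P_def using U tds_funpow_preimage_sets[OF tds] \<mu> by (simp add: invariant_prob_def)
  define f where "f L y = (\<Sum>n<Suc L. indicator (P n) y) / Suc L" for L y
  have "(\<integral>y. f L y \<partial>\<mu>) = measure \<mu> U" for L
    unfolding f_def P_def integral_divide_zero
    using integral_sum_indicator_funpow_preimages[OF tds \<mu>, of U "Suc L"] U by simp
  moreover have "(\<lambda>L. \<integral>y. f L y \<partial>\<mu>) \<longlonglongrightarrow> (\<integral>y. 1 \<partial>\<mu>)"
  proof (rule integral_dominated_convergence[where w="\<lambda>_. 1"])
    have "AE y in \<mu>. y \<in> X"
      using \<mu> tds_closed[OF tds] by (intro AE_prob_1) (simp add: invariant_prob_def emeasure_eq_measure)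
    then show "AE y in \<mu>. (\<lambda>L. f L y) \<longlonglongrightarrow> 1"
    proof eventually_elim
      case (elim y)
      have "(\<lambda>L. f L y) = (\<lambda>L. real (card (return_times T y U \<inter> {0..<Suc L})) / Suc L)"
        by (simp only: f_def P_def sum_indicator_funpow_preimages_eq_card[OF elim])
      then show ?case using banach_density_one_initial_frequency[OF dense[OF elim]] by (simp only:)
    qed
    show "AE y in \<mu>. norm (f L y) \<le> 1" for L
    proof (rule AE_I2)
      fix y
      have "(\<Sum>n<Suc L. indicator (P n) y) \<le> (\<Sum>n<Suc L. 1 :: real)" by (intro sum_mono) simp
      then show "norm (f L y) \<le> 1" by (simp add: f_def sum_nonneg)
    qed
  qed (auto simp: f_def)
  moreover have "measure \<mu> (space \<mu>) = 1" by (simp add: measure_def emeasure_space_1)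
  ultimately show ?thesis by (simp add: LIMSEQ_const_iff)
qed

lemma emeasure_closed_eq_1_if_neighbourhoods:
  fixes \<mu> :: "'a::metric_space measure"
  assumes "prob_space \<mu>" and sets: "sets \<mu> = sets borel" and K: "closed K"
    and neighbourhoods: "\<And>U. open U \<Longrightarrow> K \<subseteq> U \<Longrightarrow> measure \<mu> U = 1"
  shows "emeasure \<mu> K = 1"
proof (cases "K = {}")
  case True
  then show ?thesis using neighbourhoods[of "{}"] by simp
next
  case False
  interpret prob_space \<mu> by fact
  have space: "space \<mu> = UNIV" using sets_eq_imp_space_eq[OF sets] by simp
  define U where "U m = {y. infdist y K < 1 / Suc m}" for m
  have U_open: "open (U m)" for m
    unfolding U_def by (intro open_Collect_less continuous_intros continuous_on_infdist)
  have U_null: "emeasure \<mu> (- U m) = 0" for m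
  proof -
    have "K \<subseteq> U m" by (auto simp: U_def infdist_zero)
    have "measure \<mu> (space \<mu> - U m) = 1 - measure \<mu> (U m)"
      using U_open[of m] sets by (intro prob_compl) simp
    then have "measure \<mu> (- U m) = 0"
      using neighbourhoods[OF U_open \<open>K \<subseteq> U m\<close>] by (simp add: space Compl_eq_Diff_UNIV)
    then show ?thesis by (simp add: emeasure_eq_measure)
  qed
  have U_sets: "range (\<lambda>m. - U m) \<subseteq> sets \<mu>"
    using U_open sets by (auto simp: closed_Compl)
  have "- K \<subseteq> (\<Union>m. - U m)"
  proof
    fix y assume "y \<in> - K"
    then have "infdist y K > 0" using infdist_pos_not_in_closed K False by auto
    then obtain m where "inverse (Suc m) < infdist y K" using reals_Archimedean by blast
    then have "y \<in> - U m" by (simp add: U_def divide_inverse)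
    then show "y \<in> (\<Union>m. - U m)" by blast
  qed
  then have "emeasure \<mu> (- K) \<le> emeasure \<mu> (\<Union>m. - U m)"
    by (rule emeasure_mono[OF _ sets.countable_UN[OF U_sets]])
  also have "\<dots> = 0" by (rule emeasure_UN_eq_0[OF U_null U_sets])
  finally have "measure \<mu> (- K) = 0" by (simp add: measure_def)
  moreover have "measure \<mu> (space \<mu> - K) = 1 - measure \<mu> K"
    using K sets by (intro prob_compl) simp
  ultimately show ?thesis by (simp add: space Compl_eq_Diff_UNIV emeasure_eq_measure)
qed

lemma density_one_property_full_measure:
  fixes X :: "'a::metric_space set"
  assumes tds: "tds X T" and K: "closed K" "density_one_property X T K" and \<mu>: "invariant_prob X T \<mu>"
  shows "emeasure \<mu> K = 1"
proof (rule emeasure_closed_eq_1_if_neighbourhoods)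
  show "prob_space \<mu>" "sets \<mu> = sets borel" using \<mu> by (simp_all add: invariant_prob_def)
  fix U assume "open U" "K \<subseteq> U"
  with K(2) show "measure \<mu> U = 1"
    unfolding density_one_property_def by (intro invariant_prob_return_dense_open_full[OF tds \<mu>]) blast+
qed fact

theorem mainTheorem15:
  fixes X :: "'a::metric_space set" and T :: "'a \<Rightarrow> 'a"
  assumes "tds X T"
  shows "closed (supp_tds X T) \<and> supp_tds X T \<subseteq> X \<and>
         density_one_property X T (supp_tds X T) \<and>
         (\<forall>K. closed K \<and> K \<subseteq> X \<and> density_one_property X T K \<longrightarrow> supp_tds X T \<subseteq> K)"
proof (intro conjI allI impI)
  show "closed (supp_tds X T)" by (rule closed_supp_tds)
  show "supp_tds X T \<subseteq> X" using assms by (rule supp_tds_subset)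
  show "density_one_property X T (supp_tds X T)" using assms by (rule density_one_property_supp_tds)
  fix K assume K: "closed K \<and> K \<subseteq> X \<and> density_one_property X T K"
  show "supp_tds X T \<subseteq> K"
  proof (rule supp_tds_subset_full_measure)
    show "closed K" "K \<subseteq> X" using K by simp_all
    show "emeasure \<mu> K = 1" if "invariant_prob X T \<mu>" for \<mu>
      using K by (intro density_one_property_full_measure[OF assms _ _ that]) simp_all
  qed
qed

end
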